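(* Let $\Gamma<H$ be a cocompact discrete subgroup of the three-dimensional Heisenberg group $H$ (with metric parameter $A>0$ and magnetic parameter $B\in\mathbb R$ as in the context), let $E>0$, and let $\gamma=\exp(V_\gamma+z_\gamma Z)\in\Gamma$ with $V_\gamma\in\mathrm{span}\{X,Y\}$ and $z_\gamma\in\mathbb R$. (1) If $\gamma=e$ (i.e. $V_\gamma=0$, $z_\gamma=0$), then $L(e;E)=\emptyset$ if $E\ge|B|$, and $L(e;E)=\left\{\frac{2\pi A}{\sqrt{B^2/E^2-1}}\right\}$ if $0<E<|B|$. (2) If $V_\gamma\neq0$, then $L(\gamma;E)=\emptyset$ if $0<E\le|B|$, and $L(\gamma;E)=\left\{\frac{|V_\gamma|}{\sqrt{1-B^2/E^2}}\right\}$ if $E>|B|$, where $|V_\gamma|$ is the norm with respect to $g$. (3) If $V_\gamma=0$ and $z_\gamma\neq0$, then: if $E>|B|$, $L(\gamma;E)=\left\{\frac{\sqrt{4\pi A\ell(z_\gamma-\pi A\ell)}}{\sqrt{1-B^2/E^2}}:\ell\in\mathbb Z\setminus\{0\},\ \frac{2E}{E+|B|}<\frac{z_\gamma}{\pi A\ell}\right\}\cup\{|z_\gamma|\}$; if $0<E<|B|$, $L(\gamma;E)=\left\{\frac{\sqrt{4\pi A\ell(\pi A\ell-z_\gamma)}}{\sqrt{B^2/E^2-1}}:\ell\in\mathbb Z\setminus\{0\},\ \frac{2E}{E-|B|}<\frac{z_\gamma}{\pi A\ell}<\frac{2E}{E+|B|}\right\}\cup\{|z_\gamma|\}$; if $E=|B|$,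 $L(\gamma;E)=S\cup\{|z_\gamma|\}$, where $S=\left\{\frac{2E|z_\gamma|}{|z_0|}:z_0\in\mathbb R,\ (z_0+B)^2<E^2\right\}$ if $z_\gamma/(\pi A)\in\mathbb Z$, and $S=\emptyset$ otherwise.
   Context: Let $\mathfrak h$ be the real Lie algebra with basis $X,Y,Z$ whose only nonzero bracket among basis vectors is $[X,Y]=Z$, and $H$ the simply connected Lie group with Lie algebra $\mathfrak h$ (three-dimensional Heisenberg group); $\exp:\mathfrak h\to H$ is a diffeomorphism with $\exp(U)\exp(V)=\exp(U+V+\tfrac12[U,V])$. Fix $A>0$ and let $g$ be the left-invariant Riemannian metric for which $\{X/\sqrt A,\,Y/\sqrt A,\,Z\}$ is orthonormal. Let $\{\alpha,\beta,\zeta\}$ be the dual basis, fix $B\in\mathbb R$ and let $\Omega=d(B\zeta)=-B\,\alpha\wedge\beta$ be the (left-invariant, exact) magnetic form. A magnetic geodesic is a curve $\sigma$ with $\nabla_{\sigma'}\sigma'=F\sigma'$, $\nabla$ the Levi-Civita connection and $F$ the Lorentz force defined by $g(Fu,v)=\Omega(u,v)$. The magnetic geodesics with $\sigma(0)=e$ are exactly the curves $\sigma(t)=\exp(x(t)X+y(t)Y+z(t)Z)$ where, for parameters $(u_0,v_0,z_0)\in\mathbb R^3$: if $z_0\neq0$, $x(t)=\frac{u_0}{z_0}\sin(\frac{z_0t}{A})-\frac{v_0}{z_0}(1-\cos(\frac{z_0t}{A}))$, $y(t)=\frac{u_0}{z_0}(1-\cos(\frac{z_0t}{A}))+\frac{v_0}{z_0}\sin(\frac{z_0t}{A})$,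 $z(t)=(z_0+B+\frac{u_0^2+v_0^2}{2Az_0})t-\frac{u_0^2+v_0^2}{2z_0^2}\sin(\frac{z_0t}{A})$; if $z_0=0$, $x(t)=u_0t/A$, $y(t)=v_0t/A$, $z(t)=Bt$. All magnetic geodesics are left translates of these. The energy $E=|\sigma'|$ is constant, $E^2=(u_0^2+v_0^2)/A+(z_0+B)^2$. For $\gamma\in H\setminus\{e\}$, $\sigma$ is $\gamma$-periodic with period $\omega\neq0$ if $\gamma\sigma(t)=\sigma(t+\omega)$ for all $t$. For a cocompact discrete $\Gamma<H$, $\Gamma\backslash H$ carries the induced metric and magnetic form; closed magnetic geodesics of $\Gamma\backslash H$ in the free homotopy class of $\gamma\in\Gamma\setminus\{e\}$ are the projections of $\gamma$-periodic magnetic geodesics of $H$, and such a projection has length $E|\omega|$; for the trivial class they are projections of magnetic geodesics periodic in $H$ ($\sigma(t+\omega)=\sigma(t)$), with length $E\omega$, $\omega$ the least positive period. $L(\gamma;E)$ denotes the set of distinct lengths of closed magnetic geodesics of energy $E$ in the free homotopy class of $\gamma$. *)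

theory Defs
  imports "HOL-Analysis.Analysis"
begin

text \<open>The Heisenberg group H is modelled in exponential coordinates:
  the triple (x,y,z) stands for exp(xX + yY + zZ).  By the BCH formula
  exp(U)exp(V) = exp(U + V + [U,V]/2) with [X,Y] = Z the group law is\<close>

type_synonym heis = "real \<times> real \<times> real"

definition hmul :: "heis \<Rightarrow> heis \<Rightarrow> heis" where
  "hmul p q = (case p of (x, y, z) \<Rightarrow> case q of (x', y', z') \<Rightarrow>
      (x + x', y + y', z + z' + (x * y' - y * x') / 2))"

definition hunit :: heis where "hunit = (0, 0, 0)"

definition hinv :: "heis \<Rightarrow> heis" where
  "hinv p = (case p of (x, y, z) \<Rightarrow> (- x, - y, - z))"

text \<open>Cocompact discrete subgroups (the topology of H is that of R^3 via exp).\<close>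

definition cocompact_discrete_subgroup :: "heis set \<Rightarrow> bool" where
  "cocompact_discrete_subgroup G \<longleftrightarrow>
     hunit \<in> G \<and> (\<forall>p\<in>G. \<forall>q\<in>G. hmul p q \<in> G) \<and> (\<forall>p\<in>G. hinv p \<in> G) \<and>
     (\<exists>\<epsilon>>0. G \<inter> ball hunit \<epsilon> = {hunit}) \<and>
     (\<exists>K. compact K \<and> (\<forall>p. \<exists>g\<in>G. \<exists>k\<in>K. p = hmul g k))"

definition mgeo0 :: "real \<Rightarrow> real \<Rightarrow> real \<Rightarrow> real \<Rightarrow> real \<Rightarrow> real \<Rightarrow> heis" where
  "mgeo0 A B u0 v0 z0 t =
    (if z0 \<noteq> 0 then
       (u0 / z0 * sin (z0 * t / A) - v0 / z0 * (1 - cos (z0 * t / A)),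
        u0 / z0 * (1 - cos (z0 * t / A)) + v0 / z0 * sin (z0 * t / A),
        (z0 + B + (u0\<^sup>2 + v0\<^sup>2) / (2 * A * z0)) * t
          - (u0\<^sup>2 + v0\<^sup>2) / (2 * z0\<^sup>2) * sin (z0 * t / A))
     else (u0 * t / A, v0 * t / A, B * t))"

definition magnetic_geodesic :: "real \<Rightarrow> real \<Rightarrow> (real \<Rightarrow> heis) \<Rightarrow> bool" where
  "magnetic_geodesic A B \<sigma> \<longleftrightarrow>
     (\<exists>h u0 v0 z0. \<forall>t. \<sigma> t = hmul h (mgeo0 A B u0 v0 z0 t))"

text \<open>Speed |\<sigma>'(t)| for the left-invariant metric with {X/sqrt A, Y/sqrt A, Z} orthonormal.
  The velocity left-translated to e is x'X + y'Y + (z' - (x y' - y x')/2) Z.\<close>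

definition hspeed :: "real \<Rightarrow> (real \<Rightarrow> heis) \<Rightarrow> real \<Rightarrow> real" where
  "hspeed A \<sigma> t = (case \<sigma> t of (x, y, z) \<Rightarrow>
     case vector_derivative \<sigma> (at t) of (x', y', z') \<Rightarrow>
       sqrt (A * (x'\<^sup>2 + y'\<^sup>2) + (z' - (x * y' - y * x') / 2)\<^sup>2))"

definition has_energy :: "real \<Rightarrow> (real \<Rightarrow> heis) \<Rightarrow> real \<Rightarrow> bool" where
  "has_energy A \<sigma> E \<longleftrightarrow> (\<forall>t. \<sigma> differentiable (at t) \<and> hspeed A \<sigma> t = E)"

text \<open>L(\<gamma>;E): the set of lengths of closed magnetic geodesics of energy E in the free
  homotopy class of \<gamma> in the quotient (computed via lifts, as in the context).\<close>

definition Lset :: "real \<Rightarrow> real \<Rightarrow> heis \<Rightarrow> real \<Rightarrow> real set" where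
  "Lset A B \<gamma> E =
    (if \<gamma> = hunit then
       {E * \<omega> | \<sigma> \<omega>. magnetic_geodesic A B \<sigma> \<and> has_energy A \<sigma> E \<and> \<omega> > 0 \<and>
          (\<forall>t. \<sigma> (t + \<omega>) = \<sigma> t) \<and>
          (\<forall>\<omega>'. 0 < \<omega>' \<and> \<omega>' < \<omega> \<longrightarrow> \<not> (\<forall>t. \<sigma> (t + \<omega>') = \<sigma> t))}
     else
       {E * \<bar>\<omega>\<bar> | \<sigma> \<omega>. magnetic_geodesic A B \<sigma> \<and> has_energy A \<sigma> E \<and> \<omega> \<noteq> 0 \<and>
          (\<forall>t. hmul \<gamma> (\<sigma> t) = \<sigma> (t + \<omega>))})"

end

(*
  A magnetic geodesic is a left translate h \<cdot> \<sigma>\<^sub>0 of one of the explicit curves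
  \<sigma>\<^sub>0 = mgeo0 A B u v z0, and it has constant speed sqrt ((u^2 + v^2) / A + (z0 + B)^2).
  Left translation by h turns \<gamma>-periodicity into (h\<inverse> \<gamma> h)-periodicity of \<sigma>\<^sub>0, and conjugation
  moves only the central coordinate of \<gamma>, and only when \<gamma> is not central. A straight line (z0 = 0) is \<gamma>-periodic with
  period \<omega> exactly when \<gamma> = \<sigma>\<^sub>0 \<omega>, which gives the horizontal classes. For a helix (z0 \<noteq> 0)
  the horizontal projection is a circle, so \<gamma> must be central, and either the helix is a
  vertical line (length |c|) or the period is l turns of the circle, \<omega> = 2 \<pi> A l / z0;
  closed geodesics in the trivial class are the helices whose vertical drift over one turn is zero.
  Eliminating u and v with the energy equation leaves z0, and solving for z0 in terms of
  the turn number l gives the explicit lengths and the constraints on l.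
*)
theory Submission
  imports Defs
begin

lemma square_less_iff_abs_less: "x\<^sup>2 < y\<^sup>2 \<longleftrightarrow> \<bar>x\<bar> < \<bar>y :: real\<bar>"
  using abs_le_square_iff[of y x] by linarith

lemma sqrt_one_minus_ratio:
  assumes "E > 0" shows "sqrt (1 - B\<^sup>2 / E\<^sup>2) = sqrt (E\<^sup>2 - B\<^sup>2) / E"
proof -
  have "1 - B\<^sup>2 / E\<^sup>2 = (E\<^sup>2 - B\<^sup>2) / E\<^sup>2"
    using assms by (simp add: field_simps)
  then show ?thesis
    using assms by (simp add: real_sqrt_divide)
qed

lemma sqrt_ratio_minus_one:
  assumes "E > 0" shows "sqrt (B\<^sup>2 / E\<^sup>2 - 1) = sqrt (B\<^sup>2 - E\<^sup>2) / E"
proof -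
  have "B\<^sup>2 / E\<^sup>2 - 1 = (B\<^sup>2 - E\<^sup>2) / E\<^sup>2"
    using assms by (simp add: field_simps)
  then show ?thesis
    using assms by (simp add: real_sqrt_divide)
qed

lemma rotation_fixed_vector:
  fixes u v s c :: real
  assumes "u * s - v * (1 - c) = 0" and "u * (1 - c) + v * s = 0"
  shows "(u = 0 \<and> v = 0) \<or> (s = 0 \<and> c = 1)"
proof -
  have "(u\<^sup>2 + v\<^sup>2) * s = u * (u * s - v * (1 - c)) + v * (u * (1 - c) + v * s)"
    and "(u\<^sup>2 + v\<^sup>2) * (1 - c) = u * (u * (1 - c) + v * s) - v * (u * s - v * (1 - c))"
    by (simp_all add: algebra_simps power2_eq_square)
  then have "(u\<^sup>2 + v\<^sup>2) * s = 0" and "(u\<^sup>2 + v\<^sup>2) * (1 - c) = 0"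
    using assms by simp_all
  then show ?thesis
    by (auto simp: sum_power2_eq_zero_iff)
qed

lemma less_iff_inverse_square_gap:
  fixes \<zeta> \<rho> D :: real
  assumes "0 < \<zeta>" and "0 < \<rho>" and "D \<noteq> 0"
  shows "\<zeta> < \<rho> \<longleftrightarrow> 0 < D * (D / \<zeta>\<^sup>2 - D / \<rho>\<^sup>2)"
proof -
  have "D * (D / \<zeta>\<^sup>2 - D / \<rho>\<^sup>2) = D\<^sup>2 * (\<rho>\<^sup>2 - \<zeta>\<^sup>2) / (\<zeta>\<^sup>2 * \<rho>\<^sup>2)"
    using assms by (simp add: field_simps power2_eq_square)
  moreover have "\<zeta> < \<rho> \<longleftrightarrow> \<zeta>\<^sup>2 < \<rho>\<^sup>2"
    using assms by (simp add: square_less_iff_abs_less)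
  moreover have "0 < \<zeta>\<^sup>2 * \<rho>\<^sup>2"
    using assms by simp
  ultimately show ?thesis
    using assms by (simp add: pos_less_divide_eq zero_less_mult_iff)
qed

lemma setcompr_eliminate_parameter:
  assumes "\<And>l x. P l \<Longrightarrow> (\<exists>\<zeta>. Q l \<zeta> \<and> x = f l \<zeta>) \<longleftrightarrow> R l \<and> x = g l"
  shows "{f l \<zeta> | l \<zeta>. P l \<and> Q l \<zeta>} = {g l | l. P l \<and> R l}"
  using assms by blast

section \<open>Group law, conjugation and twisted periods\<close>

lemma hmul_Pair [simp]: "hmul (a, b, c) (x, y, z) = (a + x, b + y, c + z + (a * y - b * x) / 2)"
  by (simp add: hmul_def)

lemma hmul_hunit_left [simp]: "hmul hunit w = w"
  by (cases w) (simp add: hunit_def)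

lemma hmul_left_cancel: "hmul h w = hmul h w' \<longleftrightarrow> w = w'"
  by (cases h; cases w; cases w') auto

definition hconj :: "heis \<Rightarrow> heis \<Rightarrow> heis" where
  "hconj h \<gamma> = hmul (hinv h) (hmul \<gamma> h)"

lemma hconj_Pair: "hconj (p, q, r) (a, b, c) = (a, b, c + a * q - b * p)"
  by (simp add: hconj_def hinv_def field_simps)

lemma hconj_hunit [simp]: "hconj h hunit = hunit"
  by (cases h) (simp add: hconj_Pair hunit_def)

lemma hmul_hconj: "hmul h (hmul (hconj h \<gamma>) w) = hmul \<gamma> (hmul h w)"
  by (cases h; cases \<gamma>; cases w) (simp add: hconj_Pair field_simps)

lemma hconj_eq_iff:
  "(\<exists>h. hconj h (a, b, c) = \<gamma>') \<longleftrightarrow> (\<exists>c'. \<gamma>' = (a, b, c') \<and> ((a, b) \<noteq> (0, 0) \<or> c' = c))"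
proof
  assume "\<exists>h. hconj h (a, b, c) = \<gamma>'"
  then obtain h where h: "\<gamma>' = hconj h (a, b, c)" by blast
  obtain p q r where "h = (p, q, r)" by (cases h)
  with h show "\<exists>c'. \<gamma>' = (a, b, c') \<and> ((a, b) \<noteq> (0, 0) \<or> c' = c)"
    by (auto simp: hconj_Pair)
next
  assume "\<exists>c'. \<gamma>' = (a, b, c') \<and> ((a, b) \<noteq> (0, 0) \<or> c' = c)"
  then obtain c' where \<gamma>': "\<gamma>' = (a, b, c')" and "(a, b) \<noteq> (0, 0) \<or> c' = c" by blast
  then consider "c' = c" | "a \<noteq> 0" | "b \<noteq> 0" by auto
  then show "\<exists>h. hconj h (a, b, c) = \<gamma>'"
  proof cases
    case 1
    then show ?thesis using hconj_Pair[of 0 0 0 a b c] \<gamma>' by auto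
  next
    case 2
    then show ?thesis using hconj_Pair[of 0 "(c' - c) / a" 0 a b c] \<gamma>' by auto
  next
    case 3
    then show ?thesis using hconj_Pair[of "(c - c') / b" 0 0 a b c] \<gamma>' by auto
  qed
qed

definition gamma_periodic :: "heis \<Rightarrow> (real \<Rightarrow> heis) \<Rightarrow> real \<Rightarrow> bool" where
  "gamma_periodic \<gamma> \<sigma> \<omega> \<longleftrightarrow> (\<forall>t. hmul \<gamma> (\<sigma> t) = \<sigma> (t + \<omega>))"

lemma gamma_periodic_hunit: "gamma_periodic hunit \<sigma> \<omega> \<longleftrightarrow> (\<forall>t. \<sigma> (t + \<omega>) = \<sigma> t)"
  by (auto simp: gamma_periodic_def)

lemma gamma_periodic_left_translate:
  "gamma_periodic \<gamma> (\<lambda>t. hmul h (\<sigma> t)) \<omega> \<longleftrightarrow> gamma_periodic (hconj h \<gamma>) \<sigma> \<omega>"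
proof -
  have "hmul \<gamma> (hmul h (\<sigma> t)) = hmul h (\<sigma> (t + \<omega>)) \<longleftrightarrow> hmul (hconj h \<gamma>) (\<sigma> t) = \<sigma> (t + \<omega>)" for t
    using hmul_left_cancel[of h "hmul (hconj h \<gamma>) (\<sigma> t)" "\<sigma> (t + \<omega>)"] by (simp only: hmul_hconj)
  then show ?thesis by (simp add: gamma_periodic_def)
qed

definition least_period :: "(real \<Rightarrow> heis) \<Rightarrow> real \<Rightarrow> bool" where
  "least_period \<sigma> \<omega> \<longleftrightarrow> 0 < \<omega> \<and> gamma_periodic hunit \<sigma> \<omega> \<and>
     (\<forall>\<omega>'. 0 < \<omega>' \<and> \<omega>' < \<omega> \<longrightarrow> \<not> gamma_periodic hunit \<sigma> \<omega>')"

lemma least_period_left_translate: "least_period (\<lambda>t. hmul h (\<sigma> t)) \<omega> \<longleftrightarrow> least_period \<sigma> \<omega>"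
  by (simp add: least_period_def gamma_periodic_left_translate)

section \<open>Magnetic geodesics as translates of the model curves\<close>

lemma magnetic_geodesic_iff:
  "magnetic_geodesic A B \<sigma> \<longleftrightarrow> (\<exists>h u v z0. \<sigma> = (\<lambda>t. hmul h (mgeo0 A B u v z0 t)))"
  by (simp add: magnetic_geodesic_def fun_eq_iff)

lemma mgeo0_straight: "mgeo0 A B u v 0 t = (u * t / A, v * t / A, B * t)"
  by (simp add: mgeo0_def)

lemma mgeo0_helix:
  "z0 \<noteq> 0 \<Longrightarrow> mgeo0 A B u v z0 t =
      (u / z0 * sin (z0 * t / A) - v / z0 * (1 - cos (z0 * t / A)),
       u / z0 * (1 - cos (z0 * t / A)) + v / z0 * sin (z0 * t / A),
       (z0 + B + (u\<^sup>2 + v\<^sup>2) / (2 * A * z0)) * t - (u\<^sup>2 + v\<^sup>2) / (2 * z0\<^sup>2) * sin (z0 * t / A))"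
  by (simp add: mgeo0_def)

lemma hspeed_left_translate:
  fixes h :: heis
  assumes X: "(X has_real_derivative X') (at t)" and Y: "(Y has_real_derivative Y') (at t)"
    and Z: "(Z has_real_derivative Z') (at t)"
  defines "\<sigma> \<equiv> \<lambda>t. hmul h (X t, Y t, Z t)"
  shows "\<sigma> differentiable (at t)"
    and "hspeed A \<sigma> t = sqrt (A * (X'\<^sup>2 + Y'\<^sup>2) + (Z' - (X t * Y' - Y t * X') / 2)\<^sup>2)"
proof -
  obtain p q r where h: "h = (p, q, r)" by (cases h)
  have \<sigma>: "\<sigma> = (\<lambda>t. (p + X t, q + Y t, r + Z t + (p * Y t - q * X t) / 2))"
    by (simp add: \<sigma>_def h)
  have D: "(\<sigma> has_vector_derivative (X', Y', Z' + (p * Y' - q * X') / 2)) (at t)"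
    unfolding \<sigma> using X Y Z
    by (auto intro!: derivative_eq_intros has_vector_derivative_Pair
        simp: has_real_derivative_iff_has_vector_derivative[symmetric])
  then show "\<sigma> differentiable (at t)"
    using differentiableI_vector by blast
  from D have vd: "vector_derivative \<sigma> (at t) = (X', Y', Z' + (p * Y' - q * X') / 2)"
    by (rule vector_derivative_at)
  have "Z' + (p * Y' - q * X') / 2 - ((p + X t) * Y' - (q + Y t) * X') / 2
      = Z' - (X t * Y' - Y t * X') / 2"
    by (simp add: field_simps)
  then show "hspeed A \<sigma> t = sqrt (A * (X'\<^sup>2 + Y'\<^sup>2) + (Z' - (X t * Y' - Y t * X') / 2)\<^sup>2)"
    unfolding hspeed_def vd by (simp only: \<sigma> prod.case)
qed

lemma hspeed_mgeo0:
  assumes A: "A > 0"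
  shows "(\<lambda>t. hmul h (mgeo0 A B u v z0 t)) differentiable (at t) \<and>
    hspeed A (\<lambda>t. hmul h (mgeo0 A B u v z0 t)) t = sqrt ((u\<^sup>2 + v\<^sup>2) / A + (z0 + B)\<^sup>2)"
proof (cases "z0 = 0")
  case True
  have "A \<noteq> 0" using A by simp
  have "((\<lambda>t. u * t / A) has_real_derivative u / A) (at t)"
    and "((\<lambda>t. v * t / A) has_real_derivative v / A) (at t)"
    and "((\<lambda>t. B * t) has_real_derivative B) (at t)"
    using \<open>A \<noteq> 0\<close> by (auto intro!: derivative_eq_intros)
  from hspeed_left_translate(1)[OF this, where h = h] hspeed_left_translate(2)[OF this, where h = h and A = A]
  show ?thesis
    using \<open>A \<noteq> 0\<close> True by (simp add: mgeo0_straight field_simps power2_eq_square)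
next
  case False
  \<comment> \<open>\<open>s\<close> and \<open>c\<close> stay opaque, so that field normalisation keeps the factor \<open>s\<^sup>2 + c\<^sup>2\<close> intact\<close>
  define s c where "s = sin (z0 * t / A)" and "c = cos (z0 * t / A)"
  have "((\<lambda>t. u / z0 * sin (z0 * t / A) - v / z0 * (1 - cos (z0 * t / A)))
          has_real_derivative (u * c - v * s) / A) (at t)"
    and "((\<lambda>t. u / z0 * (1 - cos (z0 * t / A)) + v / z0 * sin (z0 * t / A))
          has_real_derivative (u * s + v * c) / A) (at t)"
    and "((\<lambda>t. (z0 + B + (u\<^sup>2 + v\<^sup>2) / (2 * A * z0)) * t - (u\<^sup>2 + v\<^sup>2) / (2 * z0\<^sup>2) * sin (z0 * t / A))
          has_real_derivative z0 + B + (u\<^sup>2 + v\<^sup>2) / (2 * A * z0) * (1 - c)) (at t)"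
    using False A by (auto intro!: derivative_eq_intros simp: s_def c_def field_simps power2_eq_square)
  note speed = hspeed_left_translate(1)[OF this, where h = h]
    hspeed_left_translate(2)[OF this, where h = h and A = A]
  have sc: "s\<^sup>2 + c\<^sup>2 = 1"
    by (simp add: s_def c_def)
  have "A * (((u * c - v * s) / A)\<^sup>2 + ((u * s + v * c) / A)\<^sup>2) = (u\<^sup>2 + v\<^sup>2) * (s\<^sup>2 + c\<^sup>2) / A"
    and "z0 + B + (u\<^sup>2 + v\<^sup>2) / (2 * A * z0) * (1 - c)
       - ((u / z0 * s - v / z0 * (1 - c)) * ((u * s + v * c) / A)
          - (u / z0 * (1 - c) + v / z0 * s) * ((u * c - v * s) / A)) / 2
       = z0 + B + (u\<^sup>2 + v\<^sup>2) * (1 - (s\<^sup>2 + c\<^sup>2)) / (2 * A * z0)"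
    using A False by (simp_all add: field_simps power2_eq_square)
  then have e1: "A * (((u * c - v * s) / A)\<^sup>2 + ((u * s + v * c) / A)\<^sup>2) = (u\<^sup>2 + v\<^sup>2) / A"
    and e2: "z0 + B + (u\<^sup>2 + v\<^sup>2) / (2 * A * z0) * (1 - c)
       - ((u / z0 * s - v / z0 * (1 - c)) * ((u * s + v * c) / A)
          - (u / z0 * (1 - c) + v / z0 * s) * ((u * c - v * s) / A)) / 2 = z0 + B"
    unfolding sc by simp_all
  show ?thesis
    using speed(1) unfolding mgeo0_helix[OF False] speed(2) s_def[symmetric] c_def[symmetric] e1 e2
    by simp
qed

lemma has_energy_mgeo0_iff:
  "A > 0 \<Longrightarrow> has_energy A (\<lambda>t. hmul h (mgeo0 A B u v z0 t)) E \<longleftrightarrow> E = sqrt ((u\<^sup>2 + v\<^sup>2) / A + (z0 + B)\<^sup>2)"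
  using hspeed_mgeo0[of A h B u v z0] by (auto simp: has_energy_def)

lemma Lset_hunit_eq:
  assumes A: "A > 0"
  shows "Lset A B hunit E = {E * \<omega> | \<omega> u v z0.
    E = sqrt ((u\<^sup>2 + v\<^sup>2) / A + (z0 + B)\<^sup>2) \<and> least_period (mgeo0 A B u v z0) \<omega>}"
proof -
  have "Lset A B hunit E = {E * \<omega> | \<sigma> \<omega>. magnetic_geodesic A B \<sigma> \<and> has_energy A \<sigma> E \<and> least_period \<sigma> \<omega>}"
    by (simp add: Lset_def least_period_def gamma_periodic_hunit conj_assoc)
  also have "\<dots> = {E * \<omega> | \<omega> u v z0.
      E = sqrt ((u\<^sup>2 + v\<^sup>2) / A + (z0 + B)\<^sup>2) \<and> least_period (mgeo0 A B u v z0) \<omega>}"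
  proof (intro equalityI subsetI)
    fix x
    assume "x \<in> {E * \<omega> | \<sigma> \<omega>. magnetic_geodesic A B \<sigma> \<and> has_energy A \<sigma> E \<and> least_period \<sigma> \<omega>}"
    then obtain \<sigma> \<omega> where x: "x = E * \<omega>" and "magnetic_geodesic A B \<sigma>"
      and "has_energy A \<sigma> E" and "least_period \<sigma> \<omega>"
      by blast
    moreover from \<open>magnetic_geodesic A B \<sigma>\<close> obtain h u v z0
      where "\<sigma> = (\<lambda>t. hmul h (mgeo0 A B u v z0 t))"
      by (auto simp: magnetic_geodesic_iff)
    ultimately have "E = sqrt ((u\<^sup>2 + v\<^sup>2) / A + (z0 + B)\<^sup>2)" and "least_period (mgeo0 A B u v z0) \<omega>"
      by (simp_all add: has_energy_mgeo0_iff[OF A] least_period_left_translate)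
    with x show "x \<in> {E * \<omega> | \<omega> u v z0.
        E = sqrt ((u\<^sup>2 + v\<^sup>2) / A + (z0 + B)\<^sup>2) \<and> least_period (mgeo0 A B u v z0) \<omega>}"
      by blast
  next
    fix x
    assume "x \<in> {E * \<omega> | \<omega> u v z0.
        E = sqrt ((u\<^sup>2 + v\<^sup>2) / A + (z0 + B)\<^sup>2) \<and> least_period (mgeo0 A B u v z0) \<omega>}"
    then obtain \<omega> u v z0 where "x = E * \<omega>" "E = sqrt ((u\<^sup>2 + v\<^sup>2) / A + (z0 + B)\<^sup>2)"
      and "least_period (\<lambda>t. hmul hunit (mgeo0 A B u v z0 t)) \<omega>"
      by (auto simp: least_period_left_translate)
    moreover have "magnetic_geodesic A B (\<lambda>t. hmul hunit (mgeo0 A B u v z0 t))"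
      unfolding magnetic_geodesic_iff by blast
    ultimately show "x \<in> {E * \<omega> | \<sigma> \<omega>. magnetic_geodesic A B \<sigma> \<and> has_energy A \<sigma> E \<and> least_period \<sigma> \<omega>}"
      using has_energy_mgeo0_iff[OF A] by blast
  qed
  finally show ?thesis .
qed

lemma Lset_nonunit_eq:
  assumes A: "A > 0" and \<gamma>: "\<gamma> \<noteq> hunit"
  shows "Lset A B \<gamma> E = {E * \<bar>\<omega>\<bar> | \<omega> h u v z0.
    E = sqrt ((u\<^sup>2 + v\<^sup>2) / A + (z0 + B)\<^sup>2) \<and> \<omega> \<noteq> 0 \<and> gamma_periodic (hconj h \<gamma>) (mgeo0 A B u v z0) \<omega>}"
proof -
  have "Lset A B \<gamma> E = {E * \<bar>\<omega>\<bar> | \<sigma> \<omega>. magnetic_geodesic A B \<sigma> \<and> has_energy A \<sigma> E \<and> \<omega> \<noteq> 0 \<and>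
      gamma_periodic \<gamma> \<sigma> \<omega>}"
    using \<gamma> by (simp add: Lset_def gamma_periodic_def)
  also have "\<dots> = {E * \<bar>\<omega>\<bar> | \<omega> h u v z0.
    E = sqrt ((u\<^sup>2 + v\<^sup>2) / A + (z0 + B)\<^sup>2) \<and> \<omega> \<noteq> 0 \<and> gamma_periodic (hconj h \<gamma>) (mgeo0 A B u v z0) \<omega>}"
    unfolding magnetic_geodesic_iff
    by (fastforce simp: has_energy_mgeo0_iff[OF A] gamma_periodic_left_translate)
  finally show ?thesis .
qed

section \<open>Periods of the model geodesics\<close>

lemma gamma_periodic_straight_iff:
  assumes A: "A > 0"
  shows "gamma_periodic (a, b, c) (mgeo0 A B u v 0) \<omega> \<longleftrightarrow>
    a = u * \<omega> / A \<and> b = v * \<omega> / A \<and> c = B * \<omega>"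
proof
  assume "gamma_periodic (a, b, c) (mgeo0 A B u v 0) \<omega>"
  from this[unfolded gamma_periodic_def, rule_format, of 0]
  show "a = u * \<omega> / A \<and> b = v * \<omega> / A \<and> c = B * \<omega>"
    by (simp add: mgeo0_straight)
next
  assume "a = u * \<omega> / A \<and> b = v * \<omega> / A \<and> c = B * \<omega>"
  then have a: "a = u * \<omega> / A" and b: "b = v * \<omega> / A" and c: "c = B * \<omega>"
    by simp_all
  show "gamma_periodic (a, b, c) (mgeo0 A B u v 0) \<omega>"
    unfolding gamma_periodic_def mgeo0_straight a b c using A by (simp add: field_simps)
qed

lemma gamma_periodic_helix_imp:
  assumes A: "A > 0" and z0: "z0 \<noteq> 0" and per: "gamma_periodic (a, b, c) (mgeo0 A B u v z0) \<omega>"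
  shows "a = 0 \<and> b = 0 \<and> c = (z0 + B + (u\<^sup>2 + v\<^sup>2) / (2 * A * z0)) * \<omega> \<and>
    (u\<^sup>2 + v\<^sup>2 = 0 \<or> (\<exists>k::int. z0 * \<omega> / A = 2 * pi * of_int k))"
proof -
  define \<phi> where "\<phi> = z0 * \<omega> / A"
  define t\<^sub>\<pi> where "t\<^sub>\<pi> = pi * A / z0"
  have \<phi>0: "z0 * (0 + \<omega>) / A = \<phi>" and \<pi>: "z0 * t\<^sub>\<pi> / A = pi" and \<pi>\<phi>: "z0 * (t\<^sub>\<pi> + \<omega>) / A = pi + \<phi>"
    using A z0 by (simp_all add: \<phi>_def t\<^sub>\<pi>_def field_simps)
  \<comment> \<open>The horizontal projection runs on a circle; at the antipodal times 0 and \<open>pi * A / z0\<close>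
    the required translation by \<open>(a, b)\<close> comes out with opposite signs.\<close>
  have "hmul (a, b, c) (mgeo0 A B u v z0 0) = mgeo0 A B u v z0 (0 + \<omega>)"
    and "hmul (a, b, c) (mgeo0 A B u v z0 t\<^sub>\<pi>) = mgeo0 A B u v z0 (t\<^sub>\<pi> + \<omega>)"
    using per by (simp_all only: gamma_periodic_def)
  then have a: "a = u / z0 * sin \<phi> - v / z0 * (1 - cos \<phi>)" and b: "b = u / z0 * (1 - cos \<phi>) + v / z0 * sin \<phi>"
    and c: "c = (z0 + B + (u\<^sup>2 + v\<^sup>2) / (2 * A * z0)) * \<omega> - (u\<^sup>2 + v\<^sup>2) / (2 * z0\<^sup>2) * sin \<phi>"
    and "a + (u / z0 * sin pi - v / z0 * (1 - cos pi)) = u / z0 * sin (pi + \<phi>) - v / z0 * (1 - cos (pi + \<phi>))"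
    and "b + (u / z0 * (1 - cos pi) + v / z0 * sin pi) = u / z0 * (1 - cos (pi + \<phi>)) + v / z0 * sin (pi + \<phi>)"
    unfolding mgeo0_helix[OF z0] \<phi>0 \<pi> \<pi>\<phi> by simp_all
  then have "a = - (u / z0 * sin \<phi> - v / z0 * (1 - cos \<phi>))" and "b = - (u / z0 * (1 - cos \<phi>) + v / z0 * sin \<phi>)"
    by (simp_all add: sin_add cos_add right_diff_distrib distrib_left)
  with a b have "a = 0" "b = 0" and "u / z0 * sin \<phi> - v / z0 * (1 - cos \<phi>) = 0"
    and "u / z0 * (1 - cos \<phi>) + v / z0 * sin \<phi> = 0"
    by linarith+
  then have planar: "u * sin \<phi> - v * (1 - cos \<phi>) = 0" "u * (1 - cos \<phi>) + v * sin \<phi> = 0"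
    using z0 by (simp_all add: field_simps)
  from rotation_fixed_vector[OF planar] consider "u = 0 \<and> v = 0" | "sin \<phi> = 0" "cos \<phi> = 1"
    by blast
  then show ?thesis
  proof cases
    case 1
    with \<open>a = 0\<close> \<open>b = 0\<close> c show ?thesis by simp
  next
    case 2
    then obtain k :: int where "\<phi> = of_int k * 2 * pi"
      using cos_one_2pi_int by blast
    with \<open>a = 0\<close> \<open>b = 0\<close> c 2 show ?thesis
      by (auto simp: \<phi>_def intro!: exI[of _ k])
  qed
qed

lemma gamma_periodic_helix_iff:
  assumes A: "A > 0" and z0: "z0 \<noteq> 0"
  shows "gamma_periodic (a, b, c) (mgeo0 A B u v z0) \<omega> \<longleftrightarrow>
    a = 0 \<and> b = 0 \<and> c = (z0 + B + (u\<^sup>2 + v\<^sup>2) / (2 * A * z0)) * \<omega> \<and>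
    (u\<^sup>2 + v\<^sup>2 = 0 \<or> (\<exists>k::int. z0 * \<omega> / A = 2 * pi * of_int k))"
proof
  assume "a = 0 \<and> b = 0 \<and> c = (z0 + B + (u\<^sup>2 + v\<^sup>2) / (2 * A * z0)) * \<omega> \<and>
    (u\<^sup>2 + v\<^sup>2 = 0 \<or> (\<exists>k::int. z0 * \<omega> / A = 2 * pi * of_int k))"
  then consider "a = 0" "b = 0" "u = 0" "v = 0" "c = (z0 + B) * \<omega>"
    | k :: int where "a = 0" "b = 0" "c = (z0 + B + (u\<^sup>2 + v\<^sup>2) / (2 * A * z0)) * \<omega>"
        "z0 * \<omega> / A = 2 * pi * of_int k"
    by (auto simp: sum_power2_eq_zero_iff)
  then show "gamma_periodic (a, b, c) (mgeo0 A B u v z0) \<omega>"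
  proof cases
    case 1
    then show ?thesis
      using z0 by (simp add: gamma_periodic_def mgeo0_helix algebra_simps)
  next
    case 2
    have "sin (z0 * (t + \<omega>) / A) = sin (z0 * t / A)" and "cos (z0 * (t + \<omega>) / A) = cos (z0 * t / A)" for t
      using 2(4) by (simp_all add: add_divide_distrib distrib_left sin_add cos_add)
    with 2 z0 show ?thesis
      by (simp add: gamma_periodic_def mgeo0_helix algebra_simps add_divide_distrib[symmetric])
  qed
qed (use gamma_periodic_helix_imp[OF A z0] in blast)

lemma gamma_periodic_hunit_mgeo0_iff:
  assumes A: "A > 0" and \<omega>: "\<omega> \<noteq> 0" and nonconst: "(u\<^sup>2 + v\<^sup>2) / A + (z0 + B)\<^sup>2 \<noteq> 0"
  shows "gamma_periodic hunit (mgeo0 A B u v z0) \<omega> \<longleftrightarrow>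
    z0 \<noteq> 0 \<and> u\<^sup>2 + v\<^sup>2 \<noteq> 0 \<and> z0 + B + (u\<^sup>2 + v\<^sup>2) / (2 * A * z0) = 0 \<and>
    (\<exists>k::int. z0 * \<omega> / A = 2 * pi * of_int k)"
proof (cases "z0 = 0")
  case True
  then show ?thesis
    using A \<omega> nonconst by (auto simp: hunit_def gamma_periodic_straight_iff)
next
  case False
  then show ?thesis
    using A \<omega> nonconst by (auto simp: hunit_def gamma_periodic_helix_iff[OF A False])
qed

lemma gamma_periodic_hunit_helix_iff:
  assumes A: "A > 0" and z0: "z0 \<noteq> 0" and r: "u\<^sup>2 + v\<^sup>2 \<noteq> 0"
    and K: "z0 + B + (u\<^sup>2 + v\<^sup>2) / (2 * A * z0) = 0" and \<omega>: "\<omega> > 0"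
  shows "gamma_periodic hunit (mgeo0 A B u v z0) \<omega> \<longleftrightarrow> (\<exists>k::int. \<omega> = of_int k * (2 * pi * A / \<bar>z0\<bar>))"
proof -
  have "0 < u\<^sup>2 + v\<^sup>2"
    using sum_power2_ge_zero[of u v] r by (intro order_le_neq_trans) auto
  with A have "0 < (u\<^sup>2 + v\<^sup>2) / A"
    by simp
  then have nonconst: "(u\<^sup>2 + v\<^sup>2) / A + (z0 + B)\<^sup>2 \<noteq> 0"
    using zero_le_power2[of "z0 + B"] by linarith
  have "(\<exists>k::int. z0 * \<omega> / A = 2 * pi * of_int k) \<longleftrightarrow> (\<exists>k::int. \<omega> = of_int k * (2 * pi * A / \<bar>z0\<bar>))"
  proof
    assume "\<exists>k::int. z0 * \<omega> / A = 2 * pi * of_int k"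
    then obtain k :: int where "z0 * \<omega> / A = 2 * pi * of_int k" by blast
    then have "\<omega> = of_int (if z0 > 0 then k else - k) * (2 * pi * A / \<bar>z0\<bar>)"
      using A z0 by (auto simp: field_simps)
    then show "\<exists>k::int. \<omega> = of_int k * (2 * pi * A / \<bar>z0\<bar>)" by blast
  next
    assume "\<exists>k::int. \<omega> = of_int k * (2 * pi * A / \<bar>z0\<bar>)"
    then obtain k :: int where "\<omega> = of_int k * (2 * pi * A / \<bar>z0\<bar>)" by blast
    then have "z0 * \<omega> / A = 2 * pi * of_int (if z0 > 0 then k else - k)"
      using A z0 by (auto simp: field_simps)
    then show "\<exists>k::int. z0 * \<omega> / A = 2 * pi * of_int k" by blast
  qed
  with gamma_periodic_hunit_mgeo0_iff[OF A _ nonconst] \<omega> z0 r K show ?thesis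
    by simp
qed

lemma least_period_helix_iff:
  assumes A: "A > 0" and z0: "z0 \<noteq> 0" and r: "u\<^sup>2 + v\<^sup>2 \<noteq> 0"
    and K: "z0 + B + (u\<^sup>2 + v\<^sup>2) / (2 * A * z0) = 0"
  shows "least_period (mgeo0 A B u v z0) \<omega> \<longleftrightarrow> \<omega> = 2 * pi * A / \<bar>z0\<bar>"
proof -
  define \<omega>\<^sub>1 where "\<omega>\<^sub>1 = 2 * pi * A / \<bar>z0\<bar>"
  have \<omega>\<^sub>1: "\<omega>\<^sub>1 > 0"
    using A z0 by (simp add: \<omega>\<^sub>1_def)
  note periods = gamma_periodic_hunit_helix_iff[OF A z0 r K, folded \<omega>\<^sub>1_def]
  have "gamma_periodic hunit (mgeo0 A B u v z0) \<omega>\<^sub>1"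
    using periods[OF \<omega>\<^sub>1] by (metis mult_1 of_int_1)
  moreover have "\<omega>\<^sub>1 \<le> \<omega>" if "0 < \<omega>" and "gamma_periodic hunit (mgeo0 A B u v z0) \<omega>" for \<omega>
  proof -
    obtain k :: int where k: "\<omega> = of_int k * \<omega>\<^sub>1"
      using periods[OF \<open>0 < \<omega>\<close>] \<open>gamma_periodic hunit (mgeo0 A B u v z0) \<omega>\<close> by blast
    with \<open>0 < \<omega>\<close> \<omega>\<^sub>1 have "k \<ge> 1"
      by (simp add: zero_less_mult_iff)
    with k \<omega>\<^sub>1 show ?thesis
      by simp
  qed
  ultimately show ?thesis
    using \<omega>\<^sub>1 unfolding least_period_def \<omega>\<^sub>1_def[symmetric] by force
qed

lemma closed_helix_energy:
  fixes A B u v z0 :: real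
  assumes A: "A > 0" and z0: "z0 \<noteq> 0" and K: "z0 + B + (u\<^sup>2 + v\<^sup>2) / (2 * A * z0) = 0"
  shows "(u\<^sup>2 + v\<^sup>2) / A + (z0 + B)\<^sup>2 = B\<^sup>2 - z0\<^sup>2"
proof -
  from K have "(u\<^sup>2 + v\<^sup>2) / A = - 2 * z0 * (z0 + B)"
    using A z0 by (simp add: field_simps)
  then show ?thesis
    by (simp add: power2_eq_square algebra_simps)
qed

section \<open>The trivial class\<close>

lemma contractible_closed_geodesic_length:
  assumes A: "A > 0" and E: "E > 0" and e: "E = sqrt ((u\<^sup>2 + v\<^sup>2) / A + (z0 + B)\<^sup>2)"
    and lp: "least_period (mgeo0 A B u v z0) \<omega>"
  shows "E < \<bar>B\<bar> \<and> E * \<omega> = 2 * pi * A / sqrt (B\<^sup>2 / E\<^sup>2 - 1)"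
proof -
  have E2: "E\<^sup>2 = (u\<^sup>2 + v\<^sup>2) / A + (z0 + B)\<^sup>2"
    using e E by simp
  have "z0 \<noteq> 0 \<and> u\<^sup>2 + v\<^sup>2 \<noteq> 0 \<and> z0 + B + (u\<^sup>2 + v\<^sup>2) / (2 * A * z0) = 0"
    using lp E E2 gamma_periodic_hunit_mgeo0_iff[OF A, of \<omega> u v z0 B]
    unfolding least_period_def by (metis less_irrefl power_not_zero)
  then have z0: "z0 \<noteq> 0" and r: "u\<^sup>2 + v\<^sup>2 \<noteq> 0" and K: "z0 + B + (u\<^sup>2 + v\<^sup>2) / (2 * A * z0) = 0"
    by simp_all
  have \<omega>: "\<omega> = 2 * pi * A / \<bar>z0\<bar>"
    using lp least_period_helix_iff[OF A z0 r K] by simp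
  have "E\<^sup>2 = B\<^sup>2 - z0\<^sup>2"
    using E2 closed_helix_energy[OF A z0 K] by simp
  then have "E\<^sup>2 < B\<^sup>2" and "\<bar>z0\<bar> = sqrt (B\<^sup>2 - E\<^sup>2)"
    using z0 by simp_all
  then show ?thesis
    using E unfolding \<omega> sqrt_ratio_minus_one[OF E] by (simp add: square_less_iff_abs_less)
qed

lemma contractible_closed_geodesic_exists:
  assumes A: "A > 0" and E: "E > 0" and EB: "E < \<bar>B\<bar>"
  shows "\<exists>\<omega> u v z0. E = sqrt ((u\<^sup>2 + v\<^sup>2) / A + (z0 + B)\<^sup>2) \<and> least_period (mgeo0 A B u v z0) \<omega> \<and>
    E * \<omega> = 2 * pi * A / sqrt (B\<^sup>2 / E\<^sup>2 - 1)"
proof -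
  define s where "s = sqrt (B\<^sup>2 - E\<^sup>2)"
  have "E\<^sup>2 < B\<^sup>2"
    using EB E by (simp add: square_less_iff_abs_less)
  then have "0 < s" and s2: "s\<^sup>2 = B\<^sup>2 - E\<^sup>2"
    by (simp_all add: s_def)
  have "s < sqrt (B\<^sup>2)"
    unfolding s_def using E by (intro real_sqrt_less_mono) simp
  with \<open>0 < s\<close> have s: "0 < s" "s < \<bar>B\<bar>"
    by simp_all
  \<comment> \<open>\<open>z0\<close> must lie strictly between \<open>0\<close> and \<open>-B\<close>, so that \<open>u\<^sup>2 = -2 A z0 (z0 + B)\<close> is positive\<close>
  define z0 where "z0 = - sgn B * s"
  have z0: "z0 \<noteq> 0" and "\<bar>z0\<bar> = s" and "z0\<^sup>2 = s\<^sup>2"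
    using s by (auto simp: z0_def abs_mult power_mult_distrib sgn_if)
  have "z0 * (z0 + B) < 0"
    using s by (auto simp: z0_def sgn_if algebra_simps mult_pos_neg)
  define u where "u = sqrt (- 2 * A * z0 * (z0 + B))"
  have u2: "u\<^sup>2 = - 2 * A * z0 * (z0 + B)"
    using mult_pos_neg[OF A \<open>z0 * (z0 + B) < 0\<close>] by (simp add: u_def)
  then have "u\<^sup>2 = - 2 * (A * (z0 * (z0 + B)))"
    by (simp add: mult.assoc)
  then have "0 < u\<^sup>2"
    using mult_pos_neg[OF A \<open>z0 * (z0 + B) < 0\<close>] by linarith
  then have r: "u\<^sup>2 + 0\<^sup>2 \<noteq> 0"
    by simp
  have K: "z0 + B + (u\<^sup>2 + 0\<^sup>2) / (2 * A * z0) = 0"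
    using A z0 u2 by (simp add: field_simps)
  have "E = sqrt ((u\<^sup>2 + 0\<^sup>2) / A + (z0 + B)\<^sup>2)"
    using closed_helix_energy[OF A z0 K] s2 \<open>z0\<^sup>2 = s\<^sup>2\<close> E by simp
  moreover have "least_period (mgeo0 A B u 0 z0) (2 * pi * A / \<bar>z0\<bar>)"
    using least_period_helix_iff[OF A z0 r K] by simp
  moreover have "E * (2 * pi * A / \<bar>z0\<bar>) = 2 * pi * A / sqrt (B\<^sup>2 / E\<^sup>2 - 1)"
    using E unfolding sqrt_ratio_minus_one[OF E] \<open>\<bar>z0\<bar> = s\<close> s_def by simp
  ultimately show ?thesis
    by blast
qed

lemma Lset_hunit:
  assumes A: "A > 0" and E: "E > 0"
  shows "Lset A B hunit E = (if E < \<bar>B\<bar> then {2 * pi * A / sqrt (B\<^sup>2 / E\<^sup>2 - 1)} else {})"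
  unfolding Lset_hunit_eq[OF A]
proof (intro equalityI subsetI)
  fix x
  assume "x \<in> {E * \<omega> | \<omega> u v z0. E = sqrt ((u\<^sup>2 + v\<^sup>2) / A + (z0 + B)\<^sup>2) \<and> least_period (mgeo0 A B u v z0) \<omega>}"
  then obtain \<omega> u v z0 where "x = E * \<omega>" and "E = sqrt ((u\<^sup>2 + v\<^sup>2) / A + (z0 + B)\<^sup>2)"
    and "least_period (mgeo0 A B u v z0) \<omega>"
    by blast
  with contractible_closed_geodesic_length[OF A E] show "x \<in> (if E < \<bar>B\<bar> then {2 * pi * A / sqrt (B\<^sup>2 / E\<^sup>2 - 1)} else {})"
    by simp
next
  fix x
  assume "x \<in> (if E < \<bar>B\<bar> then {2 * pi * A / sqrt (B\<^sup>2 / E\<^sup>2 - 1)} else {})"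
  then have "E < \<bar>B\<bar>" and x: "x = 2 * pi * A / sqrt (B\<^sup>2 / E\<^sup>2 - 1)"
    by (auto split: if_splits)
  with contractible_closed_geodesic_exists[OF A E] obtain \<omega> u v z0
    where "E = sqrt ((u\<^sup>2 + v\<^sup>2) / A + (z0 + B)\<^sup>2)" and "least_period (mgeo0 A B u v z0) \<omega>"
      and "x = E * \<omega>"
    by metis
  then show "x \<in> {E * \<omega> | \<omega> u v z0. E = sqrt ((u\<^sup>2 + v\<^sup>2) / A + (z0 + B)\<^sup>2) \<and> least_period (mgeo0 A B u v z0) \<omega>}"
    by blast
qed

section \<open>Horizontal classes\<close>

lemma horizontal_closed_geodesic_length:
  assumes A: "A > 0" and E: "E > 0" and ab: "(a, b) \<noteq> (0, 0)"
    and e: "E = sqrt ((u\<^sup>2 + v\<^sup>2) / A + (z0 + B)\<^sup>2)" and \<omega>: "\<omega> \<noteq> 0"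
    and per: "gamma_periodic (a, b, c) (mgeo0 A B u v z0) \<omega>"
  shows "\<bar>B\<bar> < E \<and> E * \<bar>\<omega>\<bar> = sqrt (A * (a\<^sup>2 + b\<^sup>2)) / sqrt (1 - B\<^sup>2 / E\<^sup>2)"
proof -
  have "z0 = 0"
    using per ab gamma_periodic_helix_iff[OF A] by blast
  with per A have ab\<omega>: "a = u * \<omega> / A" "b = v * \<omega> / A"
    by (simp_all add: gamma_periodic_straight_iff)
  have E2: "E\<^sup>2 = (u\<^sup>2 + v\<^sup>2) / A + B\<^sup>2"
    using e E \<open>z0 = 0\<close> by simp
  have "A * (a\<^sup>2 + b\<^sup>2) = (u\<^sup>2 + v\<^sup>2) / A * \<omega>\<^sup>2"
    unfolding ab\<omega> using A by (simp add: field_simps power2_eq_square)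
  also have "\<dots> = (E\<^sup>2 - B\<^sup>2) * \<omega>\<^sup>2"
    using E2 by simp
  finally have "A * (a\<^sup>2 + b\<^sup>2) = (E\<^sup>2 - B\<^sup>2) * \<omega>\<^sup>2" .
  moreover have "0 < A * (a\<^sup>2 + b\<^sup>2)"
    using A ab by (simp add: sum_power2_gt_zero_iff)
  ultimately have "B\<^sup>2 < E\<^sup>2" and "sqrt (A * (a\<^sup>2 + b\<^sup>2)) = sqrt (E\<^sup>2 - B\<^sup>2) * \<bar>\<omega>\<bar>"
    by (simp_all add: real_sqrt_mult zero_less_mult_iff)
  moreover from \<open>B\<^sup>2 < E\<^sup>2\<close> E have "\<bar>B\<bar> < E"
    by (simp add: square_less_iff_abs_less)
  ultimately show ?thesis
    using E unfolding sqrt_one_minus_ratio[OF E] by simp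
qed

lemma horizontal_closed_geodesic_exists:
  assumes A: "A > 0" and E: "E > 0" and ab: "(a, b) \<noteq> (0, 0)" and EB: "\<bar>B\<bar> < E"
  shows "\<exists>\<omega> u v. E = sqrt ((u\<^sup>2 + v\<^sup>2) / A + (0 + B)\<^sup>2) \<and> \<omega> \<noteq> 0 \<and>
    gamma_periodic (a, b, B * \<omega>) (mgeo0 A B u v 0) \<omega> \<and>
    E * \<bar>\<omega>\<bar> = sqrt (A * (a\<^sup>2 + b\<^sup>2)) / sqrt (1 - B\<^sup>2 / E\<^sup>2)"
proof -
  have pos: "0 < A * (a\<^sup>2 + b\<^sup>2)"
    using A ab by (simp add: sum_power2_gt_zero_iff)
  have D: "0 < E\<^sup>2 - B\<^sup>2"
    using EB E by (simp add: square_less_iff_abs_less)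
  define \<omega> where "\<omega> = sqrt (A * (a\<^sup>2 + b\<^sup>2)) / sqrt (E\<^sup>2 - B\<^sup>2)"
  define u v where "u = a * A / \<omega>" and "v = b * A / \<omega>"
  have \<omega>: "0 < \<omega>"
    using pos D by (simp add: \<omega>_def)
  have "(u\<^sup>2 + v\<^sup>2) / A = A * (a\<^sup>2 + b\<^sup>2) / \<omega>\<^sup>2"
    using A \<omega> by (simp add: u_def v_def field_simps power2_eq_square)
  also have "\<dots> = E\<^sup>2 - B\<^sup>2"
    using pos D A ab by (simp add: \<omega>_def power_divide divide_eq_eq)
  finally have "E = sqrt ((u\<^sup>2 + v\<^sup>2) / A + (0 + B)\<^sup>2)"
    using E by simp
  moreover have "gamma_periodic (a, b, B * \<omega>) (mgeo0 A B u v 0) \<omega>"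
    using A \<omega> by (simp add: gamma_periodic_straight_iff u_def v_def)
  moreover have "E * \<omega> = sqrt (A * (a\<^sup>2 + b\<^sup>2)) / sqrt (1 - B\<^sup>2 / E\<^sup>2)"
    using E D unfolding sqrt_one_minus_ratio[OF E] \<omega>_def by simp
  ultimately show ?thesis
    using \<omega> by (intro exI[of _ \<omega>] exI[of _ u] exI[of _ v]) simp
qed

lemma Lset_horizontal:
  assumes A: "A > 0" and E: "E > 0" and ab: "(a, b) \<noteq> (0, 0)"
  shows "Lset A B (a, b, c) E =
    (if \<bar>B\<bar> < E then {sqrt (A * (a\<^sup>2 + b\<^sup>2)) / sqrt (1 - B\<^sup>2 / E\<^sup>2)} else {})"
proof -
  have \<gamma>: "(a, b, c) \<noteq> hunit"
    using ab by (auto simp: hunit_def)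
  show ?thesis
    unfolding Lset_nonunit_eq[OF A \<gamma>]
  proof (intro equalityI subsetI)
    fix x
    assume "x \<in> {E * \<bar>\<omega>\<bar> | \<omega> h u v z0. E = sqrt ((u\<^sup>2 + v\<^sup>2) / A + (z0 + B)\<^sup>2) \<and> \<omega> \<noteq> 0 \<and>
      gamma_periodic (hconj h (a, b, c)) (mgeo0 A B u v z0) \<omega>}"
    then obtain \<omega> h u v z0 where x: "x = E * \<bar>\<omega>\<bar>" and e: "E = sqrt ((u\<^sup>2 + v\<^sup>2) / A + (z0 + B)\<^sup>2)"
      and \<omega>: "\<omega> \<noteq> 0" and per: "gamma_periodic (hconj h (a, b, c)) (mgeo0 A B u v z0) \<omega>"
      by blast
    obtain c' where "hconj h (a, b, c) = (a, b, c')"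
      by (cases h) (simp add: hconj_Pair)
    with horizontal_closed_geodesic_length[OF A E ab e \<omega>] per
    show "x \<in> (if \<bar>B\<bar> < E then {sqrt (A * (a\<^sup>2 + b\<^sup>2)) / sqrt (1 - B\<^sup>2 / E\<^sup>2)} else {})"
      by (simp add: x)
  next
    fix x
    assume "x \<in> (if \<bar>B\<bar> < E then {sqrt (A * (a\<^sup>2 + b\<^sup>2)) / sqrt (1 - B\<^sup>2 / E\<^sup>2)} else {})"
    then have EB: "\<bar>B\<bar> < E" and x: "x = sqrt (A * (a\<^sup>2 + b\<^sup>2)) / sqrt (1 - B\<^sup>2 / E\<^sup>2)"
      by (auto split: if_splits)
    obtain \<omega> u v where "E = sqrt ((u\<^sup>2 + v\<^sup>2) / A + (0 + B)\<^sup>2)" and "\<omega> \<noteq> 0"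
      and "gamma_periodic (a, b, B * \<omega>) (mgeo0 A B u v 0) \<omega>" and "x = E * \<bar>\<omega>\<bar>"
      using horizontal_closed_geodesic_exists[OF A E ab EB] x by metis
    moreover obtain h where "hconj h (a, b, c) = (a, b, B * \<omega>)"
      using hconj_eq_iff[of a b c "(a, b, B * \<omega>)"] ab by blast
    ultimately show "x \<in> {E * \<bar>\<omega>\<bar> | \<omega> h u v z0. E = sqrt ((u\<^sup>2 + v\<^sup>2) / A + (z0 + B)\<^sup>2) \<and> \<omega> \<noteq> 0 \<and>
      gamma_periodic (hconj h (a, b, c)) (mgeo0 A B u v z0) \<omega>}"
      by (metis (mono_tags, lifting) mem_Collect_eq)
  qed
qed

section \<open>Central classes\<close>

(* l is the number of turns of the horizontal circle during one period *)
definition helix_lengths :: "real \<Rightarrow> real \<Rightarrow> real \<Rightarrow> real \<Rightarrow> real set" where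
  "helix_lengths A B E c = {2 * pi * A * E * \<bar>of_int l\<bar> / \<bar>z0\<bar> | (l :: int) z0.
     l \<noteq> 0 \<and> z0 \<noteq> 0 \<and> (z0 + B)\<^sup>2 < E\<^sup>2 \<and> c = pi * A * of_int l * (1 + (E\<^sup>2 - B\<^sup>2) / z0\<^sup>2)}"

lemma closed_helix_vertical_shift:
  fixes A B E z0 l :: real
  assumes "A \<noteq> 0" and "z0 \<noteq> 0"
  shows "(z0 + B + A * (E\<^sup>2 - (z0 + B)\<^sup>2) / (2 * A * z0)) * (2 * pi * A * l / z0)
    = pi * A * l * (1 + (E\<^sup>2 - B\<^sup>2) / z0\<^sup>2)"
  using assms by (simp add: field_simps power2_eq_square)

lemma central_closed_geodesic_length:
  assumes A: "A > 0" and E: "E > 0"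
    and e: "E = sqrt ((u\<^sup>2 + v\<^sup>2) / A + (z0 + B)\<^sup>2)" and \<omega>: "\<omega> \<noteq> 0"
    and per: "gamma_periodic (0, 0, c) (mgeo0 A B u v z0) \<omega>"
  shows "E * \<bar>\<omega>\<bar> \<in> insert \<bar>c\<bar> (helix_lengths A B E c)"
proof (cases "z0 = 0")
  case True
  with per A \<omega> have "u = 0" "v = 0" "c = B * \<omega>"
    by (simp_all add: gamma_periodic_straight_iff)
  with e True show ?thesis
    by (simp add: abs_mult)
next
  case False
  with per A have cK: "c = (z0 + B + (u\<^sup>2 + v\<^sup>2) / (2 * A * z0)) * \<omega>"
    and "u\<^sup>2 + v\<^sup>2 = 0 \<or> (\<exists>k::int. z0 * \<omega> / A = 2 * pi * of_int k)"
    by (simp_all add: gamma_periodic_helix_iff)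
  then consider "u = 0" "v = 0" | k :: int where "u\<^sup>2 + v\<^sup>2 \<noteq> 0" "z0 * \<omega> / A = 2 * pi * of_int k"
    by auto
  then show ?thesis
  proof cases
    case 1
    with e cK show ?thesis
      by (simp add: abs_mult)
  next
    case 2
    have E2: "E\<^sup>2 = (u\<^sup>2 + v\<^sup>2) / A + (z0 + B)\<^sup>2"
      using e E by simp
    have \<omega>k: "\<omega> = 2 * pi * A * of_int k / z0"
      using 2(2) A False by (simp add: field_simps)
    with \<omega> have "k \<noteq> 0" by auto
    have "0 < (u\<^sup>2 + v\<^sup>2) / A"
      using A 2(1) sum_power2_ge_zero[of u v] by (simp add: order_le_neq_trans)
    with E2 have "(z0 + B)\<^sup>2 < E\<^sup>2"
      by linarith
    moreover have "c = pi * A * of_int k * (1 + (E\<^sup>2 - B\<^sup>2) / z0\<^sup>2)"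
    proof -
      have "u\<^sup>2 + v\<^sup>2 = A * (E\<^sup>2 - (z0 + B)\<^sup>2)"
        using E2 A by (simp add: field_simps)
      with cK \<omega>k show ?thesis
        using closed_helix_vertical_shift[of A z0 B E "of_int k"] A False by simp
    qed
    moreover have "E * \<bar>\<omega>\<bar> = 2 * pi * A * E * \<bar>of_int k\<bar> / \<bar>z0\<bar>"
      using A E by (simp add: \<omega>k abs_mult abs_divide)
    ultimately show ?thesis
      using \<open>k \<noteq> 0\<close> False unfolding helix_lengths_def by blast
  qed
qed

lemma central_closed_geodesic_exists:
  assumes A: "A > 0" and E: "E > 0" and c: "c \<noteq> 0" and x: "x \<in> insert \<bar>c\<bar> (helix_lengths A B E c)"
  shows "\<exists>\<omega> u v z0. x = E * \<bar>\<omega>\<bar> \<and> E = sqrt ((u\<^sup>2 + v\<^sup>2) / A + (z0 + B)\<^sup>2) \<and> \<omega> \<noteq> 0 \<and>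
    gamma_periodic (0, 0, c) (mgeo0 A B u v z0) \<omega>"
proof (cases "x = \<bar>c\<bar>")
  case True
  \<comment> \<open>a vertical line: any \<open>z0 \<noteq> 0\<close> with \<open>\<bar>z0 + B\<bar> = E\<close> will do\<close>
  define z0 where "z0 = (if E = B then - E - B else E - B)"
  have z0: "z0 \<noteq> 0" and zB: "\<bar>z0 + B\<bar> = E"
    using E by (auto simp: z0_def)
  define \<omega> where "\<omega> = c / (z0 + B)"
  have "\<omega> \<noteq> 0" and "x = E * \<bar>\<omega>\<bar>"
    using c zB E True by (auto simp: \<omega>_def abs_divide)
  moreover have "E = sqrt ((0\<^sup>2 + 0\<^sup>2) / A + (z0 + B)\<^sup>2)"
    using zB by simp
  moreover have "gamma_periodic (0, 0, c) (mgeo0 A B 0 0 z0) \<omega>"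
    using zB E by (simp add: gamma_periodic_helix_iff[OF A z0] \<omega>_def)
  ultimately show ?thesis by blast
next
  case False
  with x obtain l :: int and z0 where xl: "x = 2 * pi * A * E * \<bar>of_int l\<bar> / \<bar>z0\<bar>"
    and "l \<noteq> 0" and z0: "z0 \<noteq> 0" and lt: "(z0 + B)\<^sup>2 < E\<^sup>2"
    and cl: "c = pi * A * of_int l * (1 + (E\<^sup>2 - B\<^sup>2) / z0\<^sup>2)"
    unfolding helix_lengths_def by blast
  define u where "u = sqrt (A * (E\<^sup>2 - (z0 + B)\<^sup>2))"
  define \<omega> where "\<omega> = 2 * pi * A * of_int l / z0"
  have u2: "u\<^sup>2 + 0\<^sup>2 = A * (E\<^sup>2 - (z0 + B)\<^sup>2)"
    using A lt by (simp add: u_def)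
  have "\<omega> \<noteq> 0" and "x = E * \<bar>\<omega>\<bar>"
    using A E z0 \<open>l \<noteq> 0\<close> by (simp_all add: \<omega>_def xl abs_mult abs_divide)
  moreover have "E = sqrt ((u\<^sup>2 + 0\<^sup>2) / A + (z0 + B)\<^sup>2)"
    using u2 A E by simp
  moreover have "gamma_periodic (0, 0, c) (mgeo0 A B u 0 z0) \<omega>"
    unfolding gamma_periodic_helix_iff[OF A z0] u2
    using closed_helix_vertical_shift[of A z0 B E "of_int l"] A z0 cl
    by (auto simp: \<omega>_def)
  ultimately show ?thesis by blast
qed

lemma Lset_central:
  assumes A: "A > 0" and E: "E > 0" and c: "c \<noteq> 0"
  shows "Lset A B (0, 0, c) E = insert \<bar>c\<bar> (helix_lengths A B E c)"
proof -
  have \<gamma>: "(0, 0, c) \<noteq> hunit"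
    using c by (simp add: hunit_def)
  have conj: "hconj h (0, 0, c) = (0, 0, c)" for h
    by (cases h) (simp add: hconj_Pair)
  show ?thesis
    unfolding Lset_nonunit_eq[OF A \<gamma>] conj
    using central_closed_geodesic_length[OF A E] central_closed_geodesic_exists[OF A E c]
    by blast
qed

lemma center_speed_exists_iff:
  fixes B E \<zeta> :: real
  assumes E: "E > 0"
  shows "(\<exists>z0. z0 \<noteq> 0 \<and> (z0 + B)\<^sup>2 < E\<^sup>2 \<and> \<bar>z0\<bar> = \<zeta>) \<longleftrightarrow> 0 < \<zeta> \<and> \<bar>B\<bar> - E < \<zeta> \<and> \<zeta> < \<bar>B\<bar> + E"
proof
  assume "\<exists>z0. z0 \<noteq> 0 \<and> (z0 + B)\<^sup>2 < E\<^sup>2 \<and> \<bar>z0\<bar> = \<zeta>"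
  then obtain z0 where "z0 \<noteq> 0" "\<bar>z0 + B\<bar> < E" "\<bar>z0\<bar> = \<zeta>"
    using E by (auto simp: square_less_iff_abs_less)
  then show "0 < \<zeta> \<and> \<bar>B\<bar> - E < \<zeta> \<and> \<zeta> < \<bar>B\<bar> + E"
    by arith
next
  assume \<zeta>: "0 < \<zeta> \<and> \<bar>B\<bar> - E < \<zeta> \<and> \<zeta> < \<bar>B\<bar> + E"
  define z0 where "z0 = (if B \<ge> 0 then - \<zeta> else \<zeta>)"
  have "\<bar>z0 + B\<bar> < E"
    using \<zeta> by (auto simp: z0_def)
  then have "(z0 + B)\<^sup>2 < E\<^sup>2"
    using E by (simp add: square_less_iff_abs_less)
  with \<zeta> show "\<exists>z0. z0 \<noteq> 0 \<and> (z0 + B)\<^sup>2 < E\<^sup>2 \<and> \<bar>z0\<bar> = \<zeta>"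
    by (intro exI[of _ z0]) (auto simp: z0_def)
qed

lemma helix_lengths_radius:
  assumes E: "E > 0"
  shows "helix_lengths A B E c = {2 * pi * A * E * \<bar>of_int l\<bar> / \<zeta> | (l :: int) \<zeta>.
     l \<noteq> 0 \<and> 0 < \<zeta> \<and> \<bar>B\<bar> - E < \<zeta> \<and> \<zeta> < \<bar>B\<bar> + E \<and> c = pi * A * of_int l * (1 + (E\<^sup>2 - B\<^sup>2) / \<zeta>\<^sup>2)}"
proof (intro equalityI subsetI)
  fix x
  assume "x \<in> helix_lengths A B E c"
  then obtain l :: int and z0 where "x = 2 * pi * A * E * \<bar>of_int l\<bar> / \<bar>z0\<bar>" "l \<noteq> 0"
    and "z0 \<noteq> 0 \<and> (z0 + B)\<^sup>2 < E\<^sup>2 \<and> \<bar>z0\<bar> = \<bar>z0\<bar>" "c = pi * A * of_int l * (1 + (E\<^sup>2 - B\<^sup>2) / \<bar>z0\<bar>\<^sup>2)"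
    unfolding helix_lengths_def by auto
  then show "x \<in> {2 * pi * A * E * \<bar>of_int l\<bar> / \<zeta> | (l :: int) \<zeta>.
     l \<noteq> 0 \<and> 0 < \<zeta> \<and> \<bar>B\<bar> - E < \<zeta> \<and> \<zeta> < \<bar>B\<bar> + E \<and> c = pi * A * of_int l * (1 + (E\<^sup>2 - B\<^sup>2) / \<zeta>\<^sup>2)}"
    using center_speed_exists_iff[OF E, of B "\<bar>z0\<bar>"] by blast
next
  fix x
  assume "x \<in> {2 * pi * A * E * \<bar>of_int l\<bar> / \<zeta> | (l :: int) \<zeta>.
     l \<noteq> 0 \<and> 0 < \<zeta> \<and> \<bar>B\<bar> - E < \<zeta> \<and> \<zeta> < \<bar>B\<bar> + E \<and> c = pi * A * of_int l * (1 + (E\<^sup>2 - B\<^sup>2) / \<zeta>\<^sup>2)}"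
  then obtain l :: int and \<zeta> where x: "x = 2 * pi * A * E * \<bar>of_int l\<bar> / \<zeta>" and "l \<noteq> 0"
    and band: "0 < \<zeta> \<and> \<bar>B\<bar> - E < \<zeta> \<and> \<zeta> < \<bar>B\<bar> + E"
    and cl: "c = pi * A * of_int l * (1 + (E\<^sup>2 - B\<^sup>2) / \<zeta>\<^sup>2)"
    by blast
  from band obtain z0 where "z0 \<noteq> 0" "(z0 + B)\<^sup>2 < E\<^sup>2" "\<bar>z0\<bar> = \<zeta>"
    using center_speed_exists_iff[OF E] by blast
  moreover from this have "z0\<^sup>2 = \<zeta>\<^sup>2"
    by (metis power2_abs)
  ultimately show "x \<in> helix_lengths A B E c"
    using x \<open>l \<noteq> 0\<close> cl unfolding helix_lengths_def by force
qed

lemma helix_length_formula: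
  fixes A B E c l \<zeta> :: real
  assumes A: "A > 0" and E: "E > 0" and \<zeta>: "\<zeta> > 0" and c: "c = pi * A * l * (1 + (E\<^sup>2 - B\<^sup>2) / \<zeta>\<^sup>2)"
  shows "\<bar>B\<bar> < E \<Longrightarrow> 2 * pi * A * E * \<bar>l\<bar> / \<zeta> = sqrt (4 * pi * A * l * (c - pi * A * l)) / sqrt (1 - B\<^sup>2 / E\<^sup>2)"
    and "E < \<bar>B\<bar> \<Longrightarrow> 2 * pi * A * E * \<bar>l\<bar> / \<zeta> = sqrt (4 * pi * A * l * (pi * A * l - c)) / sqrt (B\<^sup>2 / E\<^sup>2 - 1)"
proof -
  have "4 * pi * A * l * (c - pi * A * l) = (2 * pi * A * l / \<zeta>)\<^sup>2 * (E\<^sup>2 - B\<^sup>2)"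
    and "4 * pi * A * l * (pi * A * l - c) = (2 * pi * A * l / \<zeta>)\<^sup>2 * (B\<^sup>2 - E\<^sup>2)"
    using \<zeta> by (simp_all add: c field_simps power2_eq_square)
  then have "sqrt (4 * pi * A * l * (c - pi * A * l)) = 2 * pi * A * \<bar>l\<bar> / \<zeta> * sqrt (E\<^sup>2 - B\<^sup>2)"
    and "sqrt (4 * pi * A * l * (pi * A * l - c)) = 2 * pi * A * \<bar>l\<bar> / \<zeta> * sqrt (B\<^sup>2 - E\<^sup>2)"
    using A \<zeta> by (simp_all add: real_sqrt_mult abs_mult)
  moreover have "\<bar>B\<bar> < E \<Longrightarrow> 0 < E\<^sup>2 - B\<^sup>2" and "E < \<bar>B\<bar> \<Longrightarrow> 0 < B\<^sup>2 - E\<^sup>2"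
    using E by (simp_all add: square_less_iff_abs_less)
  ultimately show "\<bar>B\<bar> < E \<Longrightarrow> 2 * pi * A * E * \<bar>l\<bar> / \<zeta> = sqrt (4 * pi * A * l * (c - pi * A * l)) / sqrt (1 - B\<^sup>2 / E\<^sup>2)"
    and "E < \<bar>B\<bar> \<Longrightarrow> 2 * pi * A * E * \<bar>l\<bar> / \<zeta> = sqrt (4 * pi * A * l * (pi * A * l - c)) / sqrt (B\<^sup>2 / E\<^sup>2 - 1)"
    using E by (simp_all add: sqrt_one_minus_ratio sqrt_ratio_minus_one)
qed

lemma helix_threshold_sum:
  fixes B E :: real
  assumes "0 < E + \<bar>B\<bar>"
  shows "2 * E / (E + \<bar>B\<bar>) = 1 + (E\<^sup>2 - B\<^sup>2) / (\<bar>B\<bar> + E)\<^sup>2"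
proof -
  have "E\<^sup>2 - B\<^sup>2 = (E - \<bar>B\<bar>) * (\<bar>B\<bar> + E)"
    by (simp add: algebra_simps power2_eq_square)
  then have "1 + (E\<^sup>2 - B\<^sup>2) / (\<bar>B\<bar> + E)\<^sup>2 = 1 + (E - \<bar>B\<bar>) / (\<bar>B\<bar> + E)"
    using assms by (simp add: power2_eq_square add.commute)
  also have "\<dots> = 2 * E / (E + \<bar>B\<bar>)"
    using assms by (simp add: field_simps)
  finally show ?thesis ..
qed

lemma helix_threshold_difference:
  fixes B E :: real
  assumes "E \<noteq> \<bar>B\<bar>"
  shows "2 * E / (E - \<bar>B\<bar>) = 1 + (E\<^sup>2 - B\<^sup>2) / (\<bar>B\<bar> - E)\<^sup>2"
proof -
  have "E\<^sup>2 - B\<^sup>2 = (\<bar>B\<bar> + E) * (E - \<bar>B\<bar>)"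
    by (simp add: algebra_simps power2_eq_square)
  then have "1 + (E\<^sup>2 - B\<^sup>2) / (\<bar>B\<bar> - E)\<^sup>2 = 1 + (\<bar>B\<bar> + E) / (E - \<bar>B\<bar>)"
    using assms unfolding power2_commute[of "\<bar>B\<bar>" E] by (simp add: power2_eq_square)
  also have "\<dots> = 2 * E / (E - \<bar>B\<bar>)"
    using assms by (simp add: field_simps)
  finally show ?thesis ..
qed

lemma helix_radius_above_iff:
  assumes A: "A > 0" and E: "E > 0" and EB: "\<bar>B\<bar> < E" and l: "l \<noteq> 0"
  shows "(\<exists>\<zeta>. 0 < \<zeta> \<and> \<bar>B\<bar> - E < \<zeta> \<and> \<zeta> < \<bar>B\<bar> + E \<and> c = pi * A * l * (1 + (E\<^sup>2 - B\<^sup>2) / \<zeta>\<^sup>2) \<and>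
      x = 2 * pi * A * E * \<bar>l\<bar> / \<zeta>) \<longleftrightarrow>
    2 * E / (E + \<bar>B\<bar>) < c / (pi * A * l) \<and> x = sqrt (4 * pi * A * l * (c - pi * A * l)) / sqrt (1 - B\<^sup>2 / E\<^sup>2)"
proof -
  define D where "D = E\<^sup>2 - B\<^sup>2"
  have D: "0 < D"
    using EB E by (simp add: D_def square_less_iff_abs_less)
  have threshold: "2 * E / (E + \<bar>B\<bar>) = 1 + D / (\<bar>B\<bar> + E)\<^sup>2"
    using E unfolding D_def by (intro helix_threshold_sum) simp
  have c_iff: "c = pi * A * l * (1 + D / \<zeta>\<^sup>2) \<longleftrightarrow> c / (pi * A * l) - 1 = D / \<zeta>\<^sup>2" for \<zeta>
    using A l by (auto simp: field_simps)
  have below: "\<zeta> < \<bar>B\<bar> + E \<longleftrightarrow> D / (\<bar>B\<bar> + E)\<^sup>2 < D / \<zeta>\<^sup>2" if "0 < \<zeta>" for \<zeta>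
    using less_iff_inverse_square_gap[OF that _ D[THEN less_imp_neq, symmetric], of "\<bar>B\<bar> + E"] E D
    by (simp add: zero_less_mult_iff)
  show ?thesis
    unfolding D_def[symmetric]
  proof
    assume "\<exists>\<zeta>. 0 < \<zeta> \<and> \<bar>B\<bar> - E < \<zeta> \<and> \<zeta> < \<bar>B\<bar> + E \<and> c = pi * A * l * (1 + D / \<zeta>\<^sup>2) \<and>
      x = 2 * pi * A * E * \<bar>l\<bar> / \<zeta>"
    then obtain \<zeta> where \<zeta>: "0 < \<zeta>" "\<zeta> < \<bar>B\<bar> + E" and cl: "c = pi * A * l * (1 + D / \<zeta>\<^sup>2)"
      and x: "x = 2 * pi * A * E * \<bar>l\<bar> / \<zeta>"
      by blast
    have "2 * E / (E + \<bar>B\<bar>) < c / (pi * A * l)"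
      using below[OF \<zeta>(1)] \<zeta>(2) cl[unfolded c_iff] threshold by linarith
    with helix_length_formula(1)[OF A E \<zeta>(1) cl[unfolded D_def] EB]
    show "2 * E / (E + \<bar>B\<bar>) < c / (pi * A * l) \<and>
      x = sqrt (4 * pi * A * l * (c - pi * A * l)) / sqrt (1 - B\<^sup>2 / E\<^sup>2)"
      by (simp add: x)
  next
    assume "2 * E / (E + \<bar>B\<bar>) < c / (pi * A * l) \<and>
      x = sqrt (4 * pi * A * l * (c - pi * A * l)) / sqrt (1 - B\<^sup>2 / E\<^sup>2)"
    then have hl: "2 * E / (E + \<bar>B\<bar>) < c / (pi * A * l)"
      and x: "x = sqrt (4 * pi * A * l * (c - pi * A * l)) / sqrt (1 - B\<^sup>2 / E\<^sup>2)"
      by simp_all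
    define \<zeta> where "\<zeta> = sqrt (D / (c / (pi * A * l) - 1))"
    have "0 < D / (\<bar>B\<bar> + E)\<^sup>2"
      using D E by simp
    with hl threshold have "0 < c / (pi * A * l) - 1"
      by linarith
    then have \<zeta>: "0 < \<zeta>" and q: "c / (pi * A * l) - 1 = D / \<zeta>\<^sup>2"
      using D by (simp_all add: \<zeta>_def)
    then have cl: "c = pi * A * l * (1 + D / \<zeta>\<^sup>2)"
      using c_iff by blast
    have "\<zeta> < \<bar>B\<bar> + E"
      using below[OF \<zeta>] hl threshold q by linarith
    moreover have "\<bar>B\<bar> - E < \<zeta>"
      using EB \<zeta> by simp
    ultimately show "\<exists>\<zeta>. 0 < \<zeta> \<and> \<bar>B\<bar> - E < \<zeta> \<and> \<zeta> < \<bar>B\<bar> + E \<and> c = pi * A * l * (1 + D / \<zeta>\<^sup>2) \<and>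
      x = 2 * pi * A * E * \<bar>l\<bar> / \<zeta>"
      using \<zeta> cl helix_length_formula(1)[OF A E \<zeta> cl[unfolded D_def] EB] x by auto
  qed
qed

lemma helix_lengths_above:
  assumes A: "A > 0" and E: "E > 0" and EB: "\<bar>B\<bar> < E"
  shows "helix_lengths A B E c =
    {sqrt (4 * pi * A * of_int l * (c - pi * A * of_int l)) / sqrt (1 - B\<^sup>2 / E\<^sup>2) | l :: int.
       l \<noteq> 0 \<and> 2 * E / (E + \<bar>B\<bar>) < c / (pi * A * of_int l)}"
  unfolding helix_lengths_radius[OF E]
  by (rule setcompr_eliminate_parameter) (use helix_radius_above_iff[OF A E EB] in auto)

lemma helix_radius_below_iff:
  assumes A: "A > 0" and E: "E > 0" and EB: "E < \<bar>B\<bar>" and l: "l \<noteq> 0"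
  shows "(\<exists>\<zeta>. 0 < \<zeta> \<and> \<bar>B\<bar> - E < \<zeta> \<and> \<zeta> < \<bar>B\<bar> + E \<and> c = pi * A * l * (1 + (E\<^sup>2 - B\<^sup>2) / \<zeta>\<^sup>2) \<and>
      x = 2 * pi * A * E * \<bar>l\<bar> / \<zeta>) \<longleftrightarrow>
    2 * E / (E - \<bar>B\<bar>) < c / (pi * A * l) \<and> c / (pi * A * l) < 2 * E / (E + \<bar>B\<bar>) \<and>
    x = sqrt (4 * pi * A * l * (pi * A * l - c)) / sqrt (B\<^sup>2 / E\<^sup>2 - 1)"
proof -
  define D where "D = E\<^sup>2 - B\<^sup>2"
  have D: "D < 0"
    using EB E by (simp add: D_def square_less_iff_abs_less)
  have upper: "2 * E / (E + \<bar>B\<bar>) = 1 + D / (\<bar>B\<bar> + E)\<^sup>2"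
    using E unfolding D_def by (intro helix_threshold_sum) simp
  have lower: "2 * E / (E - \<bar>B\<bar>) = 1 + D / (\<bar>B\<bar> - E)\<^sup>2"
    using EB unfolding D_def by (intro helix_threshold_difference) simp
  have c_iff: "c = pi * A * l * (1 + D / \<zeta>\<^sup>2) \<longleftrightarrow> c / (pi * A * l) - 1 = D / \<zeta>\<^sup>2" for \<zeta>
    using A l by (auto simp: field_simps)
  have below: "\<zeta> < \<bar>B\<bar> + E \<longleftrightarrow> D / \<zeta>\<^sup>2 < D / (\<bar>B\<bar> + E)\<^sup>2" if "0 < \<zeta>" for \<zeta>
    using less_iff_inverse_square_gap[OF that _ D[THEN less_imp_neq], of "\<bar>B\<bar> + E"] E D
    by (simp add: zero_less_mult_iff)
  have above: "\<bar>B\<bar> - E < \<zeta> \<longleftrightarrow> D / (\<bar>B\<bar> - E)\<^sup>2 < D / \<zeta>\<^sup>2" if "0 < \<zeta>" for \<zeta>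
    using less_iff_inverse_square_gap[OF _ that D[THEN less_imp_neq], of "\<bar>B\<bar> - E"] EB D
    by (simp add: zero_less_mult_iff)
  show ?thesis
    unfolding D_def[symmetric]
  proof
    assume "\<exists>\<zeta>. 0 < \<zeta> \<and> \<bar>B\<bar> - E < \<zeta> \<and> \<zeta> < \<bar>B\<bar> + E \<and> c = pi * A * l * (1 + D / \<zeta>\<^sup>2) \<and>
      x = 2 * pi * A * E * \<bar>l\<bar> / \<zeta>"
    then obtain \<zeta> where \<zeta>: "0 < \<zeta>" "\<bar>B\<bar> - E < \<zeta>" "\<zeta> < \<bar>B\<bar> + E"
      and cl: "c = pi * A * l * (1 + D / \<zeta>\<^sup>2)" and x: "x = 2 * pi * A * E * \<bar>l\<bar> / \<zeta>"
      by blast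
    have "2 * E / (E - \<bar>B\<bar>) < c / (pi * A * l)" and "c / (pi * A * l) < 2 * E / (E + \<bar>B\<bar>)"
      using above[OF \<zeta>(1)] below[OF \<zeta>(1)] \<zeta>(2,3) cl[unfolded c_iff] upper lower by linarith+
    with helix_length_formula(2)[OF A E \<zeta>(1) cl[unfolded D_def] EB]
    show "2 * E / (E - \<bar>B\<bar>) < c / (pi * A * l) \<and> c / (pi * A * l) < 2 * E / (E + \<bar>B\<bar>) \<and>
      x = sqrt (4 * pi * A * l * (pi * A * l - c)) / sqrt (B\<^sup>2 / E\<^sup>2 - 1)"
      by (simp add: x)
  next
    assume "2 * E / (E - \<bar>B\<bar>) < c / (pi * A * l) \<and> c / (pi * A * l) < 2 * E / (E + \<bar>B\<bar>) \<and>
      x = sqrt (4 * pi * A * l * (pi * A * l - c)) / sqrt (B\<^sup>2 / E\<^sup>2 - 1)"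
    then have hl: "2 * E / (E - \<bar>B\<bar>) < c / (pi * A * l)" "c / (pi * A * l) < 2 * E / (E + \<bar>B\<bar>)"
      and x: "x = sqrt (4 * pi * A * l * (pi * A * l - c)) / sqrt (B\<^sup>2 / E\<^sup>2 - 1)"
      by simp_all
    define \<zeta> where "\<zeta> = sqrt (D / (c / (pi * A * l) - 1))"
    have "D / (\<bar>B\<bar> + E)\<^sup>2 < 0"
      using D E by (simp add: divide_neg_pos)
    with hl upper have "c / (pi * A * l) - 1 < 0"
      by linarith
    with D have "0 < D / (c / (pi * A * l) - 1)"
      by (simp add: divide_neg_neg)
    then have \<zeta>: "0 < \<zeta>" and q: "c / (pi * A * l) - 1 = D / \<zeta>\<^sup>2"
      using D by (simp_all add: \<zeta>_def)
    then have cl: "c = pi * A * l * (1 + D / \<zeta>\<^sup>2)"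
      using c_iff by blast
    have "\<bar>B\<bar> - E < \<zeta>" and "\<zeta> < \<bar>B\<bar> + E"
      using above[OF \<zeta>] below[OF \<zeta>] hl upper lower q by linarith+
    then show "\<exists>\<zeta>. 0 < \<zeta> \<and> \<bar>B\<bar> - E < \<zeta> \<and> \<zeta> < \<bar>B\<bar> + E \<and> c = pi * A * l * (1 + D / \<zeta>\<^sup>2) \<and>
      x = 2 * pi * A * E * \<bar>l\<bar> / \<zeta>"
      using \<zeta> cl helix_length_formula(2)[OF A E \<zeta> cl[unfolded D_def] EB] x by auto
  qed
qed

lemma helix_lengths_below:
  assumes A: "A > 0" and E: "E > 0" and EB: "E < \<bar>B\<bar>"
  shows "helix_lengths A B E c =
    {sqrt (4 * pi * A * of_int l * (pi * A * of_int l - c)) / sqrt (B\<^sup>2 / E\<^sup>2 - 1) | l :: int.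
       l \<noteq> 0 \<and> 2 * E / (E - \<bar>B\<bar>) < c / (pi * A * of_int l) \<and> c / (pi * A * of_int l) < 2 * E / (E + \<bar>B\<bar>)}"
  unfolding helix_lengths_radius[OF E]
  by (rule setcompr_eliminate_parameter) (use helix_radius_below_iff[OF A E EB] in auto)

lemma helix_lengths_critical:
  assumes A: "A > 0" and EB: "E = \<bar>B\<bar>" and c: "c \<noteq> 0"
  shows "helix_lengths A B E c =
    (if c / (pi * A) \<in> \<int> then {2 * E * \<bar>c\<bar> / \<bar>z0\<bar> | z0 :: real. (z0 + B)\<^sup>2 < E\<^sup>2} else {})"
proof -
  have "helix_lengths A B E c = {2 * pi * A * E * \<bar>of_int l\<bar> / \<bar>z0\<bar> | (l :: int) z0.
     l \<noteq> 0 \<and> (z0 + B)\<^sup>2 < E\<^sup>2 \<and> c = pi * A * of_int l}"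
    unfolding helix_lengths_def using EB by force
  also have "\<dots> = (if c / (pi * A) \<in> \<int> then {2 * E * \<bar>c\<bar> / \<bar>z0\<bar> | z0 :: real. (z0 + B)\<^sup>2 < E\<^sup>2} else {})"
  proof (cases "c / (pi * A) \<in> \<int>")
    case True
    then obtain l :: int where "c / (pi * A) = of_int l"
      by (elim Ints_cases)
    then have cl: "c = pi * A * of_int l"
      using A by (simp add: field_simps)
    with c have "l \<noteq> 0" by auto
    have uniq: "c = pi * A * of_int l' \<longleftrightarrow> l' = l" for l' :: int
      using A cl by auto
    have val: "2 * pi * A * E * \<bar>of_int l\<bar> = 2 * E * \<bar>c\<bar>"
      using A cl by (simp add: abs_mult)
    have "{2 * pi * A * E * \<bar>of_int l'\<bar> / \<bar>z0\<bar> | (l' :: int) z0.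
        l' \<noteq> 0 \<and> (z0 + B)\<^sup>2 < E\<^sup>2 \<and> c = pi * A * of_int l'}
      = {2 * pi * A * E * \<bar>of_int l\<bar> / \<bar>z0\<bar> | z0 :: real. (z0 + B)\<^sup>2 < E\<^sup>2}"
      unfolding uniq using \<open>l \<noteq> 0\<close> by auto
    with True show ?thesis
      unfolding val by simp
  next
    case False
    have "c \<noteq> pi * A * of_int l" for l :: int
      using False A by auto
    with False show ?thesis
      by simp
  qed
  finally show ?thesis .
qed

theorem theorem4p9:
  fixes A B E a b c :: real and \<Gamma> :: "heis set"
  assumes hA: "A > 0" and hE: "E > 0"
    and h\<Gamma>: "cocompact_discrete_subgroup \<Gamma>"
    and h\<gamma>: "(a, b, c) \<in> \<Gamma>"
  shows
   "((a, b, c) = hunit \<longrightarrow>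
       (E \<ge> \<bar>B\<bar> \<longrightarrow> Lset A B (a, b, c) E = {}) \<and>
       (E < \<bar>B\<bar> \<longrightarrow> Lset A B (a, b, c) E = {2 * pi * A / sqrt (B\<^sup>2 / E\<^sup>2 - 1)})) \<and>
    ((a, b) \<noteq> (0, 0) \<longrightarrow>
       (E \<le> \<bar>B\<bar> \<longrightarrow> Lset A B (a, b, c) E = {}) \<and>
       (E > \<bar>B\<bar> \<longrightarrow> Lset A B (a, b, c) E =
          {sqrt (A * (a\<^sup>2 + b\<^sup>2)) / sqrt (1 - B\<^sup>2 / E\<^sup>2)})) \<and>
    ((a, b) = (0, 0) \<and> c \<noteq> 0 \<longrightarrow>
       (E > \<bar>B\<bar> \<longrightarrow> Lset A B (a, b, c) E =
          {sqrt (4 * pi * A * of_int l * (c - pi * A * of_int l)) / sqrt (1 - B\<^sup>2 / E\<^sup>2) | l :: int.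
             l \<noteq> 0 \<and> 2 * E / (E + \<bar>B\<bar>) < c / (pi * A * of_int l)} \<union> {\<bar>c\<bar>}) \<and>
       (E < \<bar>B\<bar> \<longrightarrow> Lset A B (a, b, c) E =
          {sqrt (4 * pi * A * of_int l * (pi * A * of_int l - c)) / sqrt (B\<^sup>2 / E\<^sup>2 - 1) | l :: int.
             l \<noteq> 0 \<and> 2 * E / (E - \<bar>B\<bar>) < c / (pi * A * of_int l) \<and>
             c / (pi * A * of_int l) < 2 * E / (E + \<bar>B\<bar>)} \<union> {\<bar>c\<bar>}) \<and>
       (E = \<bar>B\<bar> \<longrightarrow> Lset A B (a, b, c) E =
          (if c / (pi * A) \<in> \<int> then {2 * E * \<bar>c\<bar> / \<bar>z0\<bar> | z0 :: real. (z0 + B)\<^sup>2 < E\<^sup>2} else {})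
          \<union> {\<bar>c\<bar>}))"
proof (intro conjI impI)
  assume "(a, b, c) = hunit"
  then show "E \<ge> \<bar>B\<bar> \<Longrightarrow> Lset A B (a, b, c) E = {}"
    and "E < \<bar>B\<bar> \<Longrightarrow> Lset A B (a, b, c) E = {2 * pi * A / sqrt (B\<^sup>2 / E\<^sup>2 - 1)}"
    using Lset_hunit[OF hA hE, of B] by simp_all
next
  assume "(a, b) \<noteq> (0, 0)"
  then show "E \<le> \<bar>B\<bar> \<Longrightarrow> Lset A B (a, b, c) E = {}"
    and "E > \<bar>B\<bar> \<Longrightarrow> Lset A B (a, b, c) E = {sqrt (A * (a\<^sup>2 + b\<^sup>2)) / sqrt (1 - B\<^sup>2 / E\<^sup>2)}"
    using Lset_horizontal[OF hA hE, of a b B c] by simp_all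
next
  assume "(a, b) = (0, 0) \<and> c \<noteq> 0"
  then have central: "Lset A B (a, b, c) E = helix_lengths A B E c \<union> {\<bar>c\<bar>}"
    using Lset_central[OF hA hE, of c B] by auto
  show "E > \<bar>B\<bar> \<Longrightarrow> Lset A B (a, b, c) E =
          {sqrt (4 * pi * A * of_int l * (c - pi * A * of_int l)) / sqrt (1 - B\<^sup>2 / E\<^sup>2) | l :: int.
             l \<noteq> 0 \<and> 2 * E / (E + \<bar>B\<bar>) < c / (pi * A * of_int l)} \<union> {\<bar>c\<bar>}"
    unfolding central by (simp add: helix_lengths_above[OF hA hE])
  show "E < \<bar>B\<bar> \<Longrightarrow> Lset A B (a, b, c) E =
          {sqrt (4 * pi * A * of_int l * (pi * A * of_int l - c)) / sqrt (B\<^sup>2 / E\<^sup>2 - 1) | l :: int.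
             l \<noteq> 0 \<and> 2 * E / (E - \<bar>B\<bar>) < c / (pi * A * of_int l) \<and>
             c / (pi * A * of_int l) < 2 * E / (E + \<bar>B\<bar>)} \<union> {\<bar>c\<bar>}"
    unfolding central by (simp add: helix_lengths_below[OF hA hE])
  show "E = \<bar>B\<bar> \<Longrightarrow> Lset A B (a, b, c) E =
          (if c / (pi * A) \<in> \<int> then {2 * E * \<bar>c\<bar> / \<bar>z0\<bar> | z0 :: real. (z0 + B)\<^sup>2 < E\<^sup>2} else {})
          \<union> {\<bar>c\<bar>}"
    unfolding central using \<open>(a, b) = (0, 0) \<and> c \<noteq> 0\<close> by (simp add: helix_lengths_critical[OF hA])
qed

end
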